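(* Let $f:\mathbb{R}^n\to\mathbb{R}$ be differentiable with $L$-Lipschitz gradient $\nabla f$. Let $\mathcal{E}^t$ denote the event $\|\nabla f(x^t)\|_\infty\le\eta$. Then the iterate $x^{t+1}$ of Markov gradient descent (MGD) satisfies $$\mathbb{E}\left[f(x^{t+1})\,\middle|\,x^t,\mathcal{E}^t\right]\le f(x^t)+\frac{L\alpha^2}{2\eta}\|\nabla f(x^t)\|_1-\frac{\alpha}{\eta}\|\nabla f(x^t)\|_2^2 .$$
   Context: Markov gradient descent (MGD) with lattice resolution $\alpha>0$ and normalizer $\eta>0$: start at $x^0\in\alpha\mathbb{Z}^n$; at step $t$, for each coordinate $i$, conditionally on $x^t$, $\Delta^t_i\in\{0,1\}$ is Bernoulli with $\mathbb{P}[\Delta^t_i=1\mid x^t]=\min(|\partial_i f(x^t)|/\eta,1)$, and $x^{t+1}_i=x^t_i-\alpha\,\mathrm{sgn}(\partial_i f(x^t))\Delta^t_i$. (This is stochastic Markov gradient descent with the deterministic gradient estimator $G=\nabla f$.) *)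

theory Defs
  imports "HOL-Analysis.Analysis" "HOL-Probability.Probability"
begin

definition norm_inf :: "real ^ 'n \<Rightarrow> real" where
  "norm_inf v = Max (range (\<lambda>i. \<bar>v $ i\<bar>))"

definition norm_one :: "real ^ 'n \<Rightarrow> real" where
  "norm_one v = (\<Sum>i\<in>UNIV. \<bar>v $ i\<bar>)"

definition on_lattice :: "real \<Rightarrow> real ^ 'n \<Rightarrow> bool" where
  "on_lattice \<alpha> x \<longleftrightarrow> (\<forall>i. \<exists>k::int. x $ i = \<alpha> * of_int k)"

definition mgd_increments :: "real \<Rightarrow> real ^ 'n \<Rightarrow> ('n \<Rightarrow> bool) pmf" where
  "mgd_increments \<eta> g = Pi_pmf UNIV False (\<lambda>i. bernoulli_pmf (min (\<bar>g $ i\<bar> / \<eta>) 1))"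

definition mgd_step :: "real \<Rightarrow> real ^ 'n \<Rightarrow> real ^ 'n \<Rightarrow> ('n \<Rightarrow> bool) \<Rightarrow> real ^ 'n" where
  "mgd_step \<alpha> x g \<Delta> = (\<chi> i. x $ i - \<alpha> * sgn (g $ i) * (if \<Delta> i then 1 else 0))"

end

theory Submission imports Defs begin

text \<open>With the descent lemma, \<open>f (x + h) \<le> f x + \<nabla>f(x)\<bullet>h + L/2 \<parallel>h\<parallel>\<^sup>2\<close>, the value after one
  MGD step is bounded by an affine function of the Bernoulli increments \<open>\<Delta>\<^sub>i\<close>: coordinate \<open>i\<close>
  contributes \<open>-\<alpha>\<bar>\<partial>\<^sub>if\<bar> + L\<alpha>\<^sup>2/2\<close> when it moves.  On the event \<open>\<parallel>\<nabla>f(x)\<parallel>\<^sub>\<infinity> \<le> \<eta>\<close> the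
  probability of a move is exactly \<open>\<bar>\<partial>\<^sub>if\<bar>/\<eta>\<close>, so taking expectations gives the bound.\<close>

lemma lipschitz_gradient_directional_bound:
  fixes G :: "'a::real_inner \<Rightarrow> 'a"
  assumes lip: "L-lipschitz_on UNIV G" and t: "0 \<le> t"
  shows "G (x + t *\<^sub>R h) \<bullet> h - G x \<bullet> h \<le> L * t * (norm h)\<^sup>2"
proof -
  have "G (x + t *\<^sub>R h) \<bullet> h - G x \<bullet> h = (G (x + t *\<^sub>R h) - G x) \<bullet> h"
    by (simp add: inner_diff_left)
  also have "\<dots> \<le> norm (G (x + t *\<^sub>R h) - G x) * norm h"
    by (rule norm_cauchy_schwarz)
  also have "\<dots> \<le> L * norm (t *\<^sub>R h) * norm h"
    using lip unfolding lipschitz_on_def dist_norm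
    by (intro mult_right_mono) (metis UNIV_I add_diff_cancel_left', simp)
  also have "\<dots> = L * t * (norm h)\<^sup>2"
    using t by (simp add: power2_eq_square)
  finally show ?thesis .
qed

lemma descent_lemma:
  fixes f :: "'a::real_inner \<Rightarrow> real" and G :: "'a \<Rightarrow> 'a"
  assumes grad: "\<And>y. (f has_derivative (\<lambda>h. G y \<bullet> h)) (at y)"
    and lip: "L-lipschitz_on UNIV G"
  shows "f (x + h) \<le> f x + G x \<bullet> h + L / 2 * (norm h)\<^sup>2"
proof -
  define \<phi> where "\<phi> t = f (x + t *\<^sub>R h) - t * (G x \<bullet> h) - L / 2 * t\<^sup>2 * (norm h)\<^sup>2" for t
  have "\<phi> 1 \<le> \<phi> 0"
  proof (rule DERIV_nonpos_imp_nonincreasing[of 0 1])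
    fix t :: real
    assume t: "0 \<le> t" "t \<le> 1"
    have "((\<lambda>t. f (x + t *\<^sub>R h)) has_derivative (\<lambda>s. G (x + t *\<^sub>R h) \<bullet> (s *\<^sub>R h))) (at t)"
      by (rule has_derivative_compose[OF _ grad]) (auto intro!: derivative_eq_intros)
    moreover have "(\<lambda>s. G (x + t *\<^sub>R h) \<bullet> (s *\<^sub>R h)) = (*) (G (x + t *\<^sub>R h) \<bullet> h)"
      by (auto simp: fun_eq_iff)
    ultimately have "((\<lambda>t. f (x + t *\<^sub>R h)) has_real_derivative G (x + t *\<^sub>R h) \<bullet> h) (at t)"
      by (simp add: has_field_derivative_def)
    then have "(\<phi> has_real_derivative G (x + t *\<^sub>R h) \<bullet> h - G x \<bullet> h - L * t * (norm h)\<^sup>2) (at t)"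
      unfolding \<phi>_def by (auto intro!: derivative_eq_intros)
    moreover have "G (x + t *\<^sub>R h) \<bullet> h - G x \<bullet> h - L * t * (norm h)\<^sup>2 \<le> 0"
      using lipschitz_gradient_directional_bound[OF lip t(1)] by simp
    ultimately show "\<exists>y. (\<phi> has_real_derivative y) (at t) \<and> y \<le> 0"
      by blast
  qed simp
  then show ?thesis
    unfolding \<phi>_def by simp
qed

lemma inner_mgd_step_diff:
  "g \<bullet> (mgd_step \<alpha> x g \<Delta> - x) = (\<Sum>i\<in>UNIV. - \<alpha> * \<bar>g $ i\<bar> * of_bool (\<Delta> i))"
  unfolding inner_vec_def mgd_step_def
  by (intro sum.cong refl) (auto simp: sgn_if)

lemma norm_mgd_step_diff_squared:
  "(norm (mgd_step \<alpha> x g \<Delta> - x))\<^sup>2 = (\<Sum>i\<in>UNIV. \<alpha>\<^sup>2 * (sgn (g $ i))\<^sup>2 * of_bool (\<Delta> i))"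
  unfolding power2_norm_eq_inner inner_vec_def mgd_step_def
  by (intro sum.cong refl) (auto simp: power2_eq_square)

lemma mgd_step_descent:
  fixes f :: "real ^ 'n \<Rightarrow> real" and G :: "real ^ 'n \<Rightarrow> real ^ 'n"
  assumes grad: "\<And>y. (f has_derivative (\<lambda>h. G y \<bullet> h)) (at y)"
    and lip: "L-lipschitz_on UNIV G"
  shows "f (mgd_step \<alpha> x (G x) \<Delta>)
    \<le> f x + (\<Sum>i\<in>UNIV. (L / 2 * \<alpha>\<^sup>2 * (sgn (G x $ i))\<^sup>2 - \<alpha> * \<bar>G x $ i\<bar>) * of_bool (\<Delta> i))"
proof -
  define h where "h = mgd_step \<alpha> x (G x) \<Delta> - x"
  have "f (mgd_step \<alpha> x (G x) \<Delta>) = f (x + h)"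
    by (simp add: h_def)
  also have "\<dots> \<le> f x + G x \<bullet> h + L / 2 * (norm h)\<^sup>2"
    by (rule descent_lemma[OF grad lip])
  also have "\<dots> = f x
      + (\<Sum>i\<in>UNIV. (L / 2 * \<alpha>\<^sup>2 * (sgn (G x $ i))\<^sup>2 - \<alpha> * \<bar>G x $ i\<bar>) * of_bool (\<Delta> i))"
    unfolding h_def inner_mgd_step_diff norm_mgd_step_diff_squared sum_distrib_left
      add.assoc sum.distrib[symmetric]
    by (intro arg_cong[where f = "(+) (f x)"] sum.cong refl) (simp add: algebra_simps)
  finally show ?thesis .
qed

lemma expectation_mgd_increment:
  assumes "\<eta> > 0"
  shows "measure_pmf.expectation (mgd_increments \<eta> g) (\<lambda>\<Delta>. of_bool (\<Delta> i)) = min (\<bar>g $ i\<bar> / \<eta>) 1"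
proof -
  have "measure_pmf.expectation (mgd_increments \<eta> g) (\<lambda>\<Delta>. of_bool (\<Delta> i))
      = measure_pmf.expectation (map_pmf (\<lambda>\<Delta>. \<Delta> i) (mgd_increments \<eta> g)) (of_bool :: bool \<Rightarrow> real)"
    by simp
  also have "map_pmf (\<lambda>\<Delta>. \<Delta> i) (mgd_increments \<eta> g) = bernoulli_pmf (min (\<bar>g $ i\<bar> / \<eta>) 1)"
    unfolding mgd_increments_def by (subst Pi_pmf_component) auto
  also have "measure_pmf.expectation \<dots> of_bool = min (\<bar>g $ i\<bar> / \<eta>) 1"
    using assms by (subst integral_bernoulli_pmf) auto
  finally show ?thesis .
qed

lemma expectation_affine_mgd_increments:
  fixes a :: real and c :: "'n::finite \<Rightarrow> real"
  assumes "\<eta> > 0"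
  shows "measure_pmf.expectation (mgd_increments \<eta> g) (\<lambda>\<Delta>. a + (\<Sum>i\<in>UNIV. c i * of_bool (\<Delta> i)))
    = a + (\<Sum>i\<in>UNIV. c i * min (\<bar>g $ i\<bar> / \<eta>) 1)"
  by (simp add: integrable_measure_pmf_finite Bochner_Integration.integral_add
      Bochner_Integration.integral_sum expectation_mgd_increment[OF assms]
      del: sum_mult_of_bool_eq)

lemma abs_component_le_norm_inf: "\<bar>v $ i\<bar> \<le> norm_inf v"
  unfolding norm_inf_def by (rule Max_ge) auto

theorem corollary6p1:
  fixes f :: "real ^ 'n \<Rightarrow> real" and G :: "real ^ 'n \<Rightarrow> real ^ 'n"
    and L \<alpha> \<eta> :: real and x :: "real ^ 'n"
  assumes grad: "\<And>y. (f has_derivative (\<lambda>h. G y \<bullet> h)) (at y)"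
    and lip: "L-lipschitz_on UNIV G"
    and alpha: "\<alpha> > 0" and eta: "\<eta> > 0"
    and lattice: "on_lattice \<alpha> x"
    and event: "norm_inf (G x) \<le> \<eta>"
  shows "measure_pmf.expectation (mgd_increments \<eta> (G x)) (\<lambda>\<Delta>. f (mgd_step \<alpha> x (G x) \<Delta>))
         \<le> f x + L * \<alpha>\<^sup>2 / (2 * \<eta>) * norm_one (G x) - \<alpha> / \<eta> * (norm (G x))\<^sup>2"
proof -
  define g where "g = G x"
  define c where "c i = L / 2 * \<alpha>\<^sup>2 * (sgn (g $ i))\<^sup>2 - \<alpha> * \<bar>g $ i\<bar>" for i
  have prob: "min (\<bar>g $ i\<bar> / \<eta>) 1 = \<bar>g $ i\<bar> / \<eta>" for i
    using abs_component_le_norm_inf[of g i] event eta by (simp add: g_def)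
  have "measure_pmf.expectation (mgd_increments \<eta> g) (\<lambda>\<Delta>. f (mgd_step \<alpha> x g \<Delta>))
      \<le> measure_pmf.expectation (mgd_increments \<eta> g) (\<lambda>\<Delta>. f x + (\<Sum>i\<in>UNIV. c i * of_bool (\<Delta> i)))"
    using mgd_step_descent[OF grad lip] unfolding c_def g_def
    by (intro integral_mono integrable_measure_pmf_finite) auto
  also have "\<dots> = f x + (\<Sum>i\<in>UNIV. c i * (\<bar>g $ i\<bar> / \<eta>))"
    unfolding expectation_affine_mgd_increments[OF eta] prob ..
  also have "(\<Sum>i\<in>UNIV. c i * (\<bar>g $ i\<bar> / \<eta>))
      = (\<Sum>i\<in>UNIV. L * \<alpha>\<^sup>2 / (2 * \<eta>) * \<bar>g $ i\<bar> - \<alpha> / \<eta> * (g $ i * g $ i))"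
    unfolding c_def using eta by (intro sum.cong refl) (auto simp: sgn_if field_simps power2_eq_square)
  also have "\<dots> = L * \<alpha>\<^sup>2 / (2 * \<eta>) * norm_one g - \<alpha> / \<eta> * (norm g)\<^sup>2"
    unfolding norm_one_def power2_norm_eq_inner inner_vec_def
    by (simp add: sum_subtractf sum_distrib_left)
  finally show ?thesis
    by (simp add: g_def)
qed

end
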